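(* In the principal–agent contract design model described in the context, the principal's utility function $u^p:\mathcal{F}\to\mathbb{R}$ can be written as $u^p=g+h$, where $g$ is a concave function on $\mathcal{F}$ and $h$ is a piecewise constant function on $\mathcal{F}$.
   Context: There are $n$ agent actions $a_1,\dots,a_n$ with costs $c(a_i)\in\mathbb{R}$, and $m$ outcomes $o\in\{1,\dots,m\}$ with principal values $v_o\in\mathbb{R}$. Taking action $a_i$ induces a probability distribution $p(\cdot\mid a_i)$ over outcomes. A contract is a vector ${\bm f}\in\mathcal{F}=\mathbb{R}^m_{\ge 0}$, where $f_o$ is the payment to the agent on outcome $o$. Given ${\bm f}$, the agent takes an action $a^*({\bm f})$ maximizing $\mathbb{E}_{o\sim p(\cdot\mid a)}[f_o]-c(a)$ (ties broken in favor of the principal); the agent's utility is $u^a({\bm f})=\max_i\big(\mathbb{E}_{o\sim p(\cdot\mid a_i)}[f_o]-c(a_i)\big)$ and the principal's utility is $u^p({\bm f})=\mathbb{E}_{o\sim p(\cdot\mid a^*({\bm f}))}[v_o-f_o]$. A function is piecewise constant if $\mathcal{F}$ can be partitioned into finitely many pieces on each of which it is constant. *)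

theory Defs
  imports "HOL-Analysis.Analysis"
begin

text \<open>Actions range over a finite type 'a, outcomes over a finite
type 'o. p a k is the probability of outcome o under action a, c a the cost of a,
v k the principal's value for outcome o.\<close>

definition contract_space :: "(real^'o) set" where
  "contract_space = {f. \<forall>k. f $ k \<ge> 0}"

definition agent_util_act :: "('a \<Rightarrow> 'o::finite \<Rightarrow> real) \<Rightarrow> ('a \<Rightarrow> real) \<Rightarrow> real^'o \<Rightarrow> 'a \<Rightarrow> real" where
  "agent_util_act p c f a = (\<Sum>k\<in>UNIV. p a k * f $ k) - c a"

definition princ_util_act :: "('a \<Rightarrow> 'o::finite \<Rightarrow> real) \<Rightarrow> ('o \<Rightarrow> real) \<Rightarrow> real^'o \<Rightarrow> 'a \<Rightarrow> real" where
  "princ_util_act p v f a = (\<Sum>k\<in>UNIV. p a k * (v k - f $ k))"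

definition best_responses :: "('a::finite \<Rightarrow> 'o::finite \<Rightarrow> real) \<Rightarrow> ('a \<Rightarrow> real) \<Rightarrow> real^'o \<Rightarrow> 'a set" where
  "best_responses p c f = {a. \<forall>b. agent_util_act p c f b \<le> agent_util_act p c f a}"

text \<open>Principal's utility: the agent best-responds, ties broken in favour of the principal.\<close>
definition principal_utility :: "('a::finite \<Rightarrow> 'o::finite \<Rightarrow> real) \<Rightarrow> ('a \<Rightarrow> real) \<Rightarrow> ('o \<Rightarrow> real) \<Rightarrow> real^'o \<Rightarrow> real" where
  "principal_utility p c v f = Max (princ_util_act p v f ` best_responses p c f)"

definition piecewise_constant_on :: "'b set \<Rightarrow> ('b \<Rightarrow> real) \<Rightarrow> bool" where
  "piecewise_constant_on S h \<longleftrightarrow>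
     (\<exists>P. finite P \<and> \<Union>P = S \<and> (\<forall>A\<in>P. A \<noteq> {}) \<and> disjoint P \<and>
          (\<forall>A\<in>P. \<forall>x\<in>A. \<forall>y\<in>A. h x = h y))"

end

theory Submission
  imports Defs
begin

text \<open>For every action, the expected payments cancel in the sum of the principal's and the
agent's utility, which is therefore the welfare of the action, independent of the contract.
Hence on best responses the principal's utility is the welfare minus the agent's utility, and
\<open>u\<^sup>p = - u\<^sup>a + h\<close> where \<open>h f\<close> is the largest welfare among the best responses to \<open>f\<close>.
The agent's utility \<open>u\<^sup>a\<close> is a maximum of finitely many affine functions of \<open>f\<close>, hence convex,
and \<open>h\<close> depends on \<open>f\<close> only through the set of best responses, of which there are finitely many.\<close>

lemma convex_on_Max:
  assumes "finite I" "I \<noteq> {}" "\<And>i. i \<in> I \<Longrightarrow> convex_on S (f i)" "convex S"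
  shows "convex_on S (\<lambda>x. Max ((\<lambda>i. f i x) ` I))"
  unfolding convex_on_def
proof (intro conjI \<open>convex S\<close> ballI allI impI)
  fix x y and u w :: real
  assume xy: "x \<in> S" "y \<in> S" and uw: "u \<ge> 0" "w \<ge> 0" "u + w = 1"
  have "f i (u *\<^sub>R x + w *\<^sub>R y) \<le> u * Max ((\<lambda>i. f i x) ` I) + w * Max ((\<lambda>i. f i y) ` I)"
    if "i \<in> I" for i
  proof -
    have "f i (u *\<^sub>R x + w *\<^sub>R y) \<le> u * f i x + w * f i y"
      using assms(3)[OF \<open>i \<in> I\<close>] xy uw by (simp add: convex_on_def)
    also have "\<dots> \<le> u * Max ((\<lambda>i. f i x) ` I) + w * Max ((\<lambda>i. f i y) ` I)"
      using \<open>i \<in> I\<close> \<open>finite I\<close> uw by (intro add_mono mult_left_mono) auto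
    finally show ?thesis .
  qed
  then show "Max ((\<lambda>i. f i (u *\<^sub>R x + w *\<^sub>R y)) ` I)
      \<le> u * Max ((\<lambda>i. f i x) ` I) + w * Max ((\<lambda>i. f i y) ` I)"
    using assms(1,2) by (subst Max_le_iff) auto
qed

lemma piecewise_constant_on_finite_image:
  assumes "finite (h ` S)"
  shows "piecewise_constant_on S h"
  unfolding piecewise_constant_on_def
proof (intro exI[of _ "(\<lambda>t. S \<inter> h -` {t}) ` h ` S"] conjI)
  show "disjoint ((\<lambda>t. S \<inter> h -` {t}) ` h ` S)"
    by (auto simp: disjoint_def)
qed (use assms in auto)

lemma convex_contract_space: "convex contract_space"
  unfolding convex_def contract_space_def by auto

lemma convex_on_agent_util_act:
  fixes p :: "'a \<Rightarrow> 'o::finite \<Rightarrow> real"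
  shows "convex_on UNIV (\<lambda>f. agent_util_act p c f a)"
  unfolding convex_on_def
proof (intro conjI convex_UNIV ballI allI impI)
  fix x y :: "real^'o" and u w :: real
  assume "u + w = 1"
  then show "agent_util_act p c (u *\<^sub>R x + w *\<^sub>R y) a
      \<le> u * agent_util_act p c x a + w * agent_util_act p c y a"
    by (simp add: agent_util_act_def sum.distrib sum_distrib_left algebra_simps
        flip: distrib_right)
qed

definition agent_utility :: "('a::finite \<Rightarrow> 'o::finite \<Rightarrow> real) \<Rightarrow> ('a \<Rightarrow> real) \<Rightarrow> real^'o \<Rightarrow> real"
  where "agent_utility p c f = Max (range (agent_util_act p c f))"

lemma convex_on_agent_utility: "convex_on UNIV (agent_utility p c)"
  unfolding agent_utility_def
  by (intro convex_on_Max convex_on_agent_util_act) auto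

lemma best_responses_iff: "a \<in> best_responses p c f \<longleftrightarrow> agent_util_act p c f a = agent_utility p c f"
  unfolding best_responses_def agent_utility_def
  by (auto intro: Max_eqI[symmetric])

lemma best_responses_nonempty: "best_responses p c f \<noteq> {}"
proof -
  have "agent_utility p c f \<in> range (agent_util_act p c f)"
    unfolding agent_utility_def by (intro Max_in) auto
  then show ?thesis
    using best_responses_iff by fastforce
qed

definition welfare :: "('a \<Rightarrow> 'o::finite \<Rightarrow> real) \<Rightarrow> ('a \<Rightarrow> real) \<Rightarrow> ('o \<Rightarrow> real) \<Rightarrow> 'a \<Rightarrow> real"
  where "welfare p c v a = (\<Sum>k\<in>UNIV. p a k * v k) - c a"

lemma princ_util_act_eq_welfare_minus_agent_util_act:
  "princ_util_act p v f a = welfare p c v a - agent_util_act p c f a"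
  by (simp add: princ_util_act_def welfare_def agent_util_act_def right_diff_distrib sum_subtractf)

lemma principal_utility_eq:
  "principal_utility p c v f = Max (welfare p c v ` best_responses p c f) - agent_utility p c f"
proof -
  have "princ_util_act p v f ` best_responses p c f
      = (\<lambda>t. t - agent_utility p c f) ` welfare p c v ` best_responses p c f"
    by (auto simp: image_image best_responses_iff
        princ_util_act_eq_welfare_minus_agent_util_act[where c = c] intro!: image_cong)
  then show ?thesis
    unfolding principal_utility_def
    by (simp add: mono_Max_commute[symmetric] mono_def best_responses_nonempty)
qed

theorem lemma4:
  fixes p :: "'a::finite \<Rightarrow> 'o::finite \<Rightarrow> real" and c :: "'a \<Rightarrow> real" and v :: "'o \<Rightarrow> real"
  assumes "\<And>a k. p a k \<ge> 0" and "\<And>a. (\<Sum>k\<in>UNIV. p a k) = 1"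
  shows "\<exists>g h. concave_on contract_space g \<and> piecewise_constant_on contract_space h \<and>
           (\<forall>f\<in>contract_space. principal_utility p c v f = g f + h f)"
proof -
  \<comment> \<open>The decomposition holds for arbitrary outcome weights.\<close>
  define h where "h f = Max (welfare p c v ` best_responses p c f)" for f
  have "concave_on contract_space (\<lambda>f. - agent_utility p c f)"
    using convex_on_subset[OF convex_on_agent_utility _ convex_contract_space]
    by (simp add: concave_on_def)
  moreover have "finite (h ` contract_space)"
  proof (rule finite_subset)
    show "h ` contract_space \<subseteq> (\<lambda>B. Max (welfare p c v ` B)) ` UNIV"
      by (auto simp: h_def)
  qed simp
  then have "piecewise_constant_on contract_space h"
    by (rule piecewise_constant_on_finite_image)
  moreover have "principal_utility p c v f = - agent_utility p c f + h f" for f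
    by (simp add: principal_utility_eq h_def)
  ultimately show ?thesis
    by blast
qed

end
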